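(* Let $A:[0,1]\to\mathbb{R}^{n\times n}$ have entries in $H^1[0,1]$, with weak derivative $A'(s)$, and satisfy: (1) $A(0)=I$, $A(1)=0$; (2) $A(s)$ is positive semi-definite for all $s\in[0,1]$; (3) $\|A(s)\mathbf{x}\|\le\|A(s')\mathbf{x}\|$ for all $\mathbf{x}\in\mathbb{R}^n$ whenever $s\ge s'$; (4) $A$ is continuous on $[0,1]$. For $\mathbf{x}_0,\boldsymbol{\epsilon}\in\mathbb{R}^n$ let $\mathbf{x}_s=A(s)\mathbf{x}_0+(I-A(s))\boldsymbol{\epsilon}$. Then the vector fields $A'(s)A(s)^{\dagger}[\mathbf{x}_s-\boldsymbol{\epsilon}]$ and $A'(s)[\mathbf{x}_0-\boldsymbol{\epsilon}]$ are equal (as functions of $s$, for almost every $s\in[0,1]$), for all $\mathbf{x}_0,\boldsymbol{\epsilon}\in\mathbb{R}^n$; equivalently $A'(s)A(s)^\dagger A(s)=A'(s)$ almost everywhere.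
   Context: $H^1[0,1]$ is the Sobolev space of $L^2$ functions on $[0,1]$ with $L^2$ weak derivative; $A'(s)$ is the entrywise weak derivative (defined almost everywhere). $A(s)^\dagger$ denotes the Moore–Penrose pseudo-inverse of $A(s)$. *)

theory Defs
  imports "HOL-Analysis.Analysis"
begin

definition smooth_fun :: "(real \<Rightarrow> real) \<Rightarrow> bool" where
  "smooth_fun \<phi> \<longleftrightarrow> (\<exists>D :: nat \<Rightarrow> real \<Rightarrow> real. D 0 = \<phi> \<and>
      (\<forall>k x. (D k has_real_derivative D (Suc k) x) (at x)))"

definition test_fun :: "real \<Rightarrow> real \<Rightarrow> (real \<Rightarrow> real) \<Rightarrow> bool" where
  "test_fun a b \<phi> \<longleftrightarrow> smooth_fun \<phi> \<and>
      (\<exists>c d. a < c \<and> d < b \<and> (\<forall>x. x \<notin> {c..d} \<longrightarrow> \<phi> x = 0))"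

definition L2_on :: "real set \<Rightarrow> (real \<Rightarrow> real) \<Rightarrow> bool" where
  "L2_on S f \<longleftrightarrow> f \<in> borel_measurable (lebesgue_on S) \<and>
      integrable (lebesgue_on S) (\<lambda>x. (f x)\<^sup>2)"

definition weak_deriv_on :: "real \<Rightarrow> real \<Rightarrow> (real \<Rightarrow> real) \<Rightarrow> (real \<Rightarrow> real) \<Rightarrow> bool" where
  "weak_deriv_on a b f g \<longleftrightarrow>
      integrable (lebesgue_on {a..b}) f \<and> integrable (lebesgue_on {a..b}) g \<and>
      (\<forall>\<phi>. test_fun a b \<phi> \<longrightarrow>
         (LINT x|lebesgue_on {a..b}. f x * deriv \<phi> x) = - (LINT x|lebesgue_on {a..b}. g x * \<phi> x))"

definition H1_with_deriv :: "(real \<Rightarrow> real) \<Rightarrow> (real \<Rightarrow> real) \<Rightarrow> bool" where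
  "H1_with_deriv f g \<longleftrightarrow> L2_on {0..1} f \<and> L2_on {0..1} g \<and> weak_deriv_on 0 1 f g"

definition pinv :: "real^'n^'n \<Rightarrow> real^'n^'n" where
  "pinv A = (THE X. A ** X ** A = A \<and> X ** A ** X = X \<and>
                    transpose (A ** X) = A ** X \<and> transpose (X ** A) = X ** A)"

definition psd :: "real^'n^'n \<Rightarrow> bool" where
  "psd A \<longleftrightarrow> transpose A = A \<and> (\<forall>x. 0 \<le> x \<bullet> (A *v x))"

end

theory Submission
  imports Defs "HOL-Computational_Algebra.Polynomial" "HOL-Real_Asymp.Real_Asymp"
begin

text \<open>Since \<open>norm (A s *v x)\<close> does not increase with \<open>s\<close>, the kernels of the matrices
  \<open>A s\<close> increase with \<open>s\<close>; hence they take only finitely many values, and each vector lies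
  in the kernel of \<open>A s\<close> for an interval of times. On that interval the entries of \<open>A s *v v\<close>
  vanish, so their weak derivatives, which are the entries of \<open>A' s *v v\<close>, vanish almost
  everywhere (test against smooth bumps approximating the indicator of subintervals).
  Therefore the kernel of \<open>A s\<close> is contained in that of \<open>A' s\<close> for almost every \<open>s\<close>.
  As \<open>A s\<close> is symmetric, its pseudo-inverse exists, and \<open>w - pinv (A s) *v (A s *v w)\<close> lies
  in the kernel of \<open>A s\<close>; this gives \<open>A' s ** pinv (A s) ** A s = A' s\<close>.\<close>

section \<open>Smooth functions\<close>

lemma smooth_funI_closed:
  assumes "P f"
    and closed: "\<And>u. P u \<Longrightarrow> \<exists>u'. P u' \<and> (\<forall>x. (u has_real_derivative u' x) (at x))"
  shows "smooth_fun f"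
proof -
  define next_deriv where
    "next_deriv u = (SOME u'. P u' \<and> (\<forall>x. (u has_real_derivative u' x) (at x)))" for u
  have next_deriv: "P (next_deriv u) \<and> (\<forall>x. (u has_real_derivative next_deriv u x) (at x))"
    if "P u" for u
    unfolding next_deriv_def by (rule someI_ex[OF closed[OF that]])
  define D where "D k = (next_deriv ^^ k) f" for k
  have "P (D k)" for k
    by (induction k) (auto simp: D_def assms(1) next_deriv)
  then have "(D k has_real_derivative D (Suc k) x) (at x)" for k x
    using next_deriv by (simp add: D_def)
  then show ?thesis
    unfolding smooth_fun_def by (intro exI[of _ D]) (simp add: D_def)
qed

lemma smooth_fun_continuous: "smooth_fun f \<Longrightarrow> continuous_on UNIV f"
  unfolding smooth_fun_def by (metis DERIV_isCont continuous_at_imp_continuous_on)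

lemma smooth_fun_deriv_continuous:
  assumes "smooth_fun f"
  shows "continuous_on UNIV (deriv f)"
proof -
  obtain D where D: "D 0 = f" "\<And>k x. (D k has_real_derivative D (Suc k) x) (at x)"
    using assms unfolding smooth_fun_def by blast
  then have "deriv f = D 1"
    using DERIV_imp_deriv by fastforce
  with D(2) show ?thesis
    by (metis DERIV_isCont continuous_at_imp_continuous_on)
qed

inductive leibniz_term ::
  "(nat \<Rightarrow> real \<Rightarrow> real) \<Rightarrow> (nat \<Rightarrow> real \<Rightarrow> real) \<Rightarrow> (real \<Rightarrow> real) \<Rightarrow> bool"
  for D E where
  product: "leibniz_term D E (\<lambda>x. D i x * E j x)"
| add: "leibniz_term D E u \<Longrightarrow> leibniz_term D E v \<Longrightarrow> leibniz_term D E (\<lambda>x. u x + v x)"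

lemma smooth_fun_mult:
  assumes "smooth_fun f" "smooth_fun g"
  shows "smooth_fun (\<lambda>x. f x * g x)"
proof -
  obtain D where D: "D 0 = f" "\<And>k x. (D k has_real_derivative D (Suc k) x) (at x)"
    using assms(1) unfolding smooth_fun_def by blast
  obtain E where E: "E 0 = g" "\<And>k x. (E k has_real_derivative E (Suc k) x) (at x)"
    using assms(2) unfolding smooth_fun_def by blast
  show ?thesis
  proof (rule smooth_funI_closed[where P = "leibniz_term D E"])
    show "leibniz_term D E (\<lambda>x. f x * g x)"
      using leibniz_term.product[of D E 0 0] by (simp add: D E)
  next
    fix u assume "leibniz_term D E u"
    then show "\<exists>u'. leibniz_term D E u' \<and> (\<forall>x. (u has_real_derivative u' x) (at x))"
    proof induction
      case (product i j)
      have "((\<lambda>x. D i x * E j x) has_real_derivative D (Suc i) x * E j x + D i x * E (Suc j) x) (at x)"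
        for x using DERIV_mult[OF D(2) E(2)] by (simp add: algebra_simps)
      then show ?case
        by (blast intro: leibniz_term.intros)
    next
      case (add u v)
      then show ?case
        by (blast intro: leibniz_term.add DERIV_add)
    qed
  qed
qed

lemma smooth_fun_compose_affine:
  assumes "smooth_fun f"
  shows "smooth_fun (\<lambda>x. f (c * x + d))"
proof -
  obtain D where D: "D 0 = f" "\<And>k x. (D k has_real_derivative D (Suc k) x) (at x)"
    using assms unfolding smooth_fun_def by blast
  have "((\<lambda>x. D k (c * x + d)) has_real_derivative D (Suc k) (c * x + d) * c) (at x)" for k x
    by (rule DERIV_chain2[OF D(2)]) (auto intro!: derivative_eq_intros)
  then have "((\<lambda>x. c ^ k * D k (c * x + d)) has_real_derivative c ^ Suc k * D (Suc k) (c * x + d)) (at x)"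
    for k x
    using DERIV_cmult[where c = "c ^ k"] by (fastforce simp: algebra_simps)
  then show ?thesis
    unfolding smooth_fun_def by (intro exI[of _ "\<lambda>k x. c ^ k * D k (c * x + d)"]) (simp add: D(1))
qed

lemma deriv_eq_0_if_zero_on_open:
  assumes "open U" "x \<in> U" "\<And>y. y \<in> U \<Longrightarrow> f y = 0"
  shows "deriv f x = 0"
  by (rule DERIV_imp_deriv, rule has_field_derivative_transform_within_open[OF DERIV_const assms(1,2)])
     (simp add: assms(3))

definition exp_neg_inv :: "real \<Rightarrow> real" where
  "exp_neg_inv x = (if 0 < x then exp (- 1 / x) else 0)"

definition poly_exp_neg_inv :: "real poly \<Rightarrow> real \<Rightarrow> real" where
  "poly_exp_neg_inv p x = (if 0 < x then poly p (1 / x) * exp (- 1 / x) else 0)"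

lemma tendsto_poly_div_exp_0: "((\<lambda>t. poly p t / exp t) \<longlongrightarrow> (0::real)) at_top"
proof -
  have "(\<lambda>t. poly p t / exp t) = (\<lambda>t. \<Sum>i\<le>degree p. coeff p i * (t ^ i / exp t))"
    by (auto simp: poly_altdef sum_divide_distrib)
  then show ?thesis
    by (simp only:) (intro tendsto_null_sum tendsto_mult_right_zero tendsto_power_div_exp_0)
qed

lemma poly_exp_neg_inv_has_real_derivative:
  "(poly_exp_neg_inv p has_real_derivative poly_exp_neg_inv ([:0, 0, 1:] * (p - pderiv p)) x) (at x)"
proof (cases x "0::real" rule: linorder_cases)
  case less
  have "(poly_exp_neg_inv p has_real_derivative 0) (at x)"
    by (rule has_field_derivative_transform_within_open[OF DERIV_const open_lessThan[of 0]])
       (use less in \<open>auto simp: poly_exp_neg_inv_def\<close>)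
  then show ?thesis
    using less by (simp add: poly_exp_neg_inv_def)
next
  case greater
  have inv: "((\<lambda>x. 1 / x) has_real_derivative - (1 / x\<^sup>2)) (at x)"
    and neg_inv: "((\<lambda>x. - 1 / x) has_real_derivative 1 / x\<^sup>2) (at x)"
    using greater by (auto intro!: derivative_eq_intros simp: power2_eq_square)
  have "((\<lambda>x. poly p (1 / x) * exp (- 1 / x)) has_real_derivative
      poly p (1 / x) * (exp (- 1 / x) * (1 / x\<^sup>2)) + poly (pderiv p) (1 / x) * - (1 / x\<^sup>2) * exp (- 1 / x))
      (at x)"
    by (intro DERIV_mult' DERIV_chain2[OF poly_DERIV inv] DERIV_chain2[OF DERIV_exp neg_inv])
  also have "poly p (1 / x) * (exp (- 1 / x) * (1 / x\<^sup>2)) + poly (pderiv p) (1 / x) * - (1 / x\<^sup>2) * exp (- 1 / x)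
      = poly ([:0, 0, 1:] * (p - pderiv p)) (1 / x) * exp (- 1 / x)"
    by (simp add: algebra_simps power2_eq_square)
  finally have "(poly_exp_neg_inv p has_real_derivative
      poly ([:0, 0, 1:] * (p - pderiv p)) (1 / x) * exp (- 1 / x)) (at x)"
    by (rule has_field_derivative_transform_within_open[OF _ open_greaterThan[of 0]])
       (use greater in \<open>auto simp: poly_exp_neg_inv_def\<close>)
  then show ?thesis
    using greater by (simp add: poly_exp_neg_inv_def)
next
  case equal
  \<comment> \<open>With \<open>t = 1 / y\<close>, the right difference quotient at \<open>0\<close> is \<open>t * poly p t / exp t\<close>.\<close>
  have "((\<lambda>t. poly (pCons 0 p) t / exp t) \<longlongrightarrow> 0) at_top"
    by (rule tendsto_poly_div_exp_0)
  then have "((\<lambda>t. poly_exp_neg_inv p (inverse t) / inverse t) \<longlongrightarrow> 0) at_top"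
    by (rule Lim_transform_eventually)
       (use eventually_gt_at_top[of 0] in \<open>eventually_elim, simp add: poly_exp_neg_inv_def exp_minus divide_inverse\<close>)
  then have "((\<lambda>y. poly_exp_neg_inv p y / y) \<longlongrightarrow> 0) (at_right 0)"
    by (simp add: filterlim_at_right_to_top)
  moreover have "((\<lambda>y. poly_exp_neg_inv p y / y) \<longlongrightarrow> 0) (at_left 0)"
    by (rule Lim_transform_eventually[OF tendsto_const])
       (auto simp: eventually_at_left_field poly_exp_neg_inv_def intro: exI[of _ "-1"])
  ultimately have "((\<lambda>y. (poly_exp_neg_inv p y - poly_exp_neg_inv p 0) / (y - 0)) \<longlongrightarrow> 0) (at 0)"
    by (simp add: filterlim_at_split poly_exp_neg_inv_def)
  then show ?thesis
    using equal by (simp add: has_field_derivative_iff poly_exp_neg_inv_def)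
qed

lemma smooth_fun_exp_neg_inv: "smooth_fun exp_neg_inv"
proof (rule smooth_funI_closed[where P = "\<lambda>u. \<exists>p. u = poly_exp_neg_inv p"])
  show "\<exists>p. exp_neg_inv = poly_exp_neg_inv p"
    by (intro exI[of _ 1]) (simp add: fun_eq_iff exp_neg_inv_def poly_exp_neg_inv_def)
qed (use poly_exp_neg_inv_has_real_derivative in blast)

lemma exp_neg_inv_nonneg: "0 \<le> exp_neg_inv x"
  by (simp add: exp_neg_inv_def)

lemma exp_neg_inv_le_1: "exp_neg_inv x \<le> 1"
  by (simp add: exp_neg_inv_def)

lemma exp_neg_inv_tendsto_1: "(exp_neg_inv \<longlongrightarrow> 1) at_top"
proof -
  have "((\<lambda>x::real. exp (- 1 / x)) \<longlongrightarrow> 1) at_top"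
    by real_asymp
  then show ?thesis
    by (rule Lim_transform_eventually)
       (use eventually_gt_at_top[of 0] in \<open>eventually_elim, simp add: exp_neg_inv_def\<close>)
qed

definition bump :: "real \<Rightarrow> real \<Rightarrow> real \<Rightarrow> real \<Rightarrow> real" where
  "bump k c d x = exp_neg_inv (k * (x - c) - 1) * exp_neg_inv (k * (d - x) - 1)"

lemma smooth_fun_bump: "smooth_fun (bump k c d)"
proof -
  have "smooth_fun (\<lambda>x. exp_neg_inv (k * x + (- k * c - 1)) * exp_neg_inv ((- k) * x + (k * d - 1)))"
    by (intro smooth_fun_mult smooth_fun_compose_affine smooth_fun_exp_neg_inv)
  also have "(\<lambda>x. exp_neg_inv (k * x + (- k * c - 1)) * exp_neg_inv ((- k) * x + (k * d - 1))) = bump k c d"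
    by (simp add: fun_eq_iff bump_def algebra_simps)
  finally show ?thesis .
qed

lemma bump_eq_0_left:
  assumes "0 < k" "x < c + 1 / k"
  shows "bump k c d x = 0"
proof -
  have "k * (x - c) < 1"
    using assms by (simp add: field_simps)
  then show ?thesis
    by (simp add: bump_def exp_neg_inv_def)
qed

lemma bump_eq_0_right:
  assumes "0 < k" "d - 1 / k < x"
  shows "bump k c d x = 0"
proof -
  have "k * (d - x) < 1"
    using assms by (simp add: field_simps)
  then show ?thesis
    by (simp add: bump_def exp_neg_inv_def)
qed

lemma bump_nonneg: "0 \<le> bump k c d x"
  by (simp add: bump_def exp_neg_inv_nonneg)

lemma bump_le_1: "bump k c d x \<le> 1"
  unfolding bump_def by (intro mult_le_one exp_neg_inv_le_1 exp_neg_inv_nonneg)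

lemma bump_tendsto_indicator:
  "(\<lambda>n. bump (real (Suc n)) c d x) \<longlonglongrightarrow> indicator {c<..<d} x"
proof (cases "c < x \<and> x < d")
  case True
  have "filterlim (\<lambda>n. real (Suc n) * (x - c) - 1) at_top sequentially"
    "filterlim (\<lambda>n. real (Suc n) * (d - x) - 1) at_top sequentially"
    using True by real_asymp+
  then have "(\<lambda>n. bump (real (Suc n)) c d x) \<longlonglongrightarrow> 1 * 1"
    unfolding bump_def
    by (intro tendsto_mult filterlim_compose[OF exp_neg_inv_tendsto_1])
  then show ?thesis
    using True by simp
next
  case False
  have "bump (real (Suc n)) c d x = 0" for n
  proof -
    have "real (Suc n) * (x - c) \<le> 0 \<or> real (Suc n) * (d - x) \<le> 0"
      using False by (auto simp: mult_le_0_iff)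
    then show ?thesis
      by (auto simp: bump_def exp_neg_inv_def)
  qed
  then show ?thesis
    using False by simp
qed

lemma test_fun_bump:
  assumes "a \<le> c" "d \<le> b" "0 < k"
  shows "test_fun a b (bump k c d)"
  unfolding test_fun_def
proof (intro conjI exI allI impI)
  show "smooth_fun (bump k c d)"
    by (rule smooth_fun_bump)
  have "0 < 1 / k"
    using assms(3) by simp
  then show "a < c + 1 / k" "d - 1 / k < b"
    using assms(1,2) by linarith+
  show "bump k c d x = 0" if "x \<notin> {c + 1 / k..d - 1 / k}" for x
    using that bump_eq_0_left[OF \<open>0 < k\<close>] bump_eq_0_right[OF \<open>0 < k\<close>] by force
qed

lemma deriv_bump_eq_0:
  assumes "0 < k" "x \<le> c \<or> d \<le> x"
  shows "deriv (bump k c d) x = 0"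
proof -
  have "0 < 1 / k"
    using assms(1) by simp
  with assms(2) consider "x < c + 1 / k" | "d - 1 / k < x"
    by linarith
  then show ?thesis
  proof cases
    case 1
    then show ?thesis
      by (intro deriv_eq_0_if_zero_on_open[OF open_lessThan] bump_eq_0_left assms(1)) auto
  next
    case 2
    then show ?thesis
      by (intro deriv_eq_0_if_zero_on_open[OF open_greaterThan] bump_eq_0_right assms(1)) auto
  qed
qed

section \<open>Weak derivatives\<close>

lemma integrable_mult_continuous:
  fixes f h :: "real \<Rightarrow> real"
  assumes f: "integrable (lebesgue_on {a..b}) f" and h: "continuous_on {a..b} h"
  shows "integrable (lebesgue_on {a..b}) (\<lambda>x. f x * h x)"
proof -
  have "(\<lambda>x. h x * f x) absolutely_integrable_on {a..b}"
  proof (rule absolutely_integrable_bounded_measurable_product_real)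
    show "h \<in> borel_measurable (lebesgue_on {a..b})"
      by (rule continuous_imp_measurable_on_sets_lebesgue[OF h]) auto
    show "bounded (h ` {a..b})"
      by (intro compact_imp_bounded compact_continuous_image h compact_Icc)
    show "f absolutely_integrable_on {a..b}"
      using f by (simp add: integrable_restrict_space set_integrable_def)
  qed auto
  then show ?thesis
    by (simp add: integrable_restrict_space set_integrable_def mult.commute)
qed

lemma weak_deriv_on_add:
  assumes f: "weak_deriv_on a b f f'" and g: "weak_deriv_on a b g g'"
  shows "weak_deriv_on a b (\<lambda>x. f x + g x) (\<lambda>x. f' x + g' x)"
  unfolding weak_deriv_on_def
proof (intro conjI allI impI)
  show "integrable (lebesgue_on {a..b}) (\<lambda>x. f x + g x)"
    "integrable (lebesgue_on {a..b}) (\<lambda>x. f' x + g' x)"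
    using f g by (auto simp: weak_deriv_on_def)
  fix \<phi> assume \<phi>: "test_fun a b \<phi>"
  then have "continuous_on {a..b} \<phi>" "continuous_on {a..b} (deriv \<phi>)"
    by (auto simp: test_fun_def intro: continuous_on_subset smooth_fun_continuous smooth_fun_deriv_continuous)
  then have "integrable (lebesgue_on {a..b}) (\<lambda>x. u x * deriv \<phi> x)"
    "integrable (lebesgue_on {a..b}) (\<lambda>x. u' x * \<phi> x)"
    if "weak_deriv_on a b u u'" for u u'
    using that by (auto simp: weak_deriv_on_def intro: integrable_mult_continuous)
  note integrable = this[OF f] this[OF g]
  from f g \<phi> show "(LINT x|lebesgue_on {a..b}. (f x + g x) * deriv \<phi> x)
      = - (LINT x|lebesgue_on {a..b}. (f' x + g' x) * \<phi> x)"
    by (simp add: distrib_right weak_deriv_on_def Bochner_Integration.integral_add[OF integrable(1,3)]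
        Bochner_Integration.integral_add[OF integrable(2,4)])
qed

lemma weak_deriv_on_cmult:
  "weak_deriv_on a b f f' \<Longrightarrow> weak_deriv_on a b (\<lambda>x. c * f x) (\<lambda>x. c * f' x)"
  by (auto simp: weak_deriv_on_def mult.assoc)

lemma weak_deriv_on_sum:
  assumes "finite S" "\<And>j. j \<in> S \<Longrightarrow> weak_deriv_on a b (f j) (f' j)"
  shows "weak_deriv_on a b (\<lambda>x. \<Sum>j\<in>S. c j * f j x) (\<lambda>x. \<Sum>j\<in>S. c j * f' j x)"
  using assms
proof (induction S rule: finite_induct)
  case empty
  then show ?case
    by (simp add: weak_deriv_on_def)
next
  case (insert j S)
  then show ?case
    by (simp add: weak_deriv_on_add weak_deriv_on_cmult)
qed

lemma weak_deriv_on_integral_bump_eq_0: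
  fixes f g :: "real \<Rightarrow> real"
  assumes wd: "weak_deriv_on a b f g" and "a \<le> c" "d \<le> b" "0 < k"
    and f0: "\<And>x. c < x \<Longrightarrow> x < d \<Longrightarrow> f x = 0"
  shows "(LINT x|lebesgue_on {a..b}. g x * bump k c d x) = 0"
proof -
  have "(\<lambda>x. f x * deriv (bump k c d) x) = (\<lambda>x. 0)"
  proof
    fix x
    show "f x * deriv (bump k c d) x = 0"
      using f0[of x] deriv_bump_eq_0[OF \<open>0 < k\<close>, of x c d] by (cases "c < x \<and> x < d") auto
  qed
  moreover have "(LINT x|lebesgue_on {a..b}. f x * deriv (bump k c d) x)
      = - (LINT x|lebesgue_on {a..b}. g x * bump k c d x)"
    using wd test_fun_bump[OF \<open>a \<le> c\<close> \<open>d \<le> b\<close> \<open>0 < k\<close>] unfolding weak_deriv_on_def by simp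
  ultimately show ?thesis
    by simp
qed

lemma weak_deriv_on_integral_indicator_eq_0:
  fixes f g :: "real \<Rightarrow> real"
  assumes wd: "weak_deriv_on a b f g" and "a \<le> c" "d \<le> b"
    and f0: "\<And>x. c < x \<Longrightarrow> x < d \<Longrightarrow> f x = 0"
  shows "(LINT x|lebesgue_on {a..b}. g x * indicator {c<..<d} x) = 0"
proof -
  let ?M = "lebesgue_on {a..b}"
  have g: "integrable ?M g"
    using wd by (simp add: weak_deriv_on_def)
  have "(\<lambda>n. LINT x|?M. g x * bump (real (Suc n)) c d x) \<longlonglongrightarrow> (LINT x|?M. g x * indicator {c<..<d} x)"
  proof (rule integral_dominated_convergence[where w = "\<lambda>x. norm (g x)"])
    have "bump k c d \<in> borel_measurable ?M" for k
      using smooth_fun_continuous[OF smooth_fun_bump]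
      by (intro continuous_imp_measurable_on_sets_lebesgue) (auto intro: continuous_on_subset)
    moreover have "g \<in> borel_measurable ?M"
      using g by (rule borel_measurable_integrable)
    moreover have "indicator {c<..<d} \<in> borel_measurable ?M"
      by (intro measurable_restrict_space1 measurable_completion) simp
    ultimately show "(\<lambda>x. g x * bump (real (Suc n)) c d x) \<in> borel_measurable ?M"
      and "(\<lambda>x. g x * indicator {c<..<d} x) \<in> borel_measurable ?M" for n
      by measurable
    show "integrable ?M (\<lambda>x. norm (g x))"
      using g by simp
    show "AE x in ?M. (\<lambda>n. g x * bump (real (Suc n)) c d x) \<longlonglongrightarrow> g x * indicator {c<..<d} x"
      by (intro AE_I2 tendsto_mult_left bump_tendsto_indicator)
    show "AE x in ?M. norm (g x * bump (real (Suc n)) c d x) \<le> norm (g x)" for n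
      using bump_nonneg bump_le_1 by (intro AE_I2) (auto simp: abs_mult intro: mult_left_le)
  qed
  moreover have "(LINT x|?M. g x * bump (real (Suc n)) c d x) = 0" for n
    using weak_deriv_on_integral_bump_eq_0[OF wd \<open>a \<le> c\<close> \<open>d \<le> b\<close> _ f0] by simp
  ultimately show ?thesis
    by (simp add: LIMSEQ_const_iff)
qed

lemma AE_eq_0_if_integral_greaterThan_eq_0_lborel:
  fixes G :: "real \<Rightarrow> real"
  assumes G: "integrable lborel G" and G0: "\<And>t. (LINT x|lborel. indicator {t<..} x * G x) = 0"
  shows "AE x in lborel. G x = 0"
proof -
  have Gm[measurable]: "G \<in> borel_measurable borel"
    using G by (simp add: borel_measurable_integrable)
  have int: "integrable lborel (\<lambda>x. indicator {t<..} x * max (h x) 0)"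
    if "integrable lborel h" for h :: "real \<Rightarrow> real" and t
    using integrable_mult_indicator[of "{t<..}" lborel "\<lambda>x. max (h x) 0"] that by simp
  \<comment> \<open>The densities of the positive and the negative part of \<open>G\<close> agree on all half-lines.\<close>
  have emeasure_density_part: "emeasure (density lborel (\<lambda>x. ennreal (h x))) {t<..}
      = ennreal (LINT x|lborel. indicator {t<..} x * max (h x) 0)"
    if h: "integrable lborel h" for h :: "real \<Rightarrow> real" and t
  proof -
    have [measurable]: "h \<in> borel_measurable borel"
      using h by (simp add: borel_measurable_integrable)
    have "emeasure (density lborel (\<lambda>x. ennreal (h x))) {t<..}
        = (\<integral>\<^sup>+ x. ennreal (indicator {t<..} x * max (h x) 0) \<partial>lborel)"
      by (subst emeasure_density) (auto intro!: nn_integral_cong simp: indicator_def max_def ennreal_neg)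
    also have "\<dots> = ennreal (LINT x|lborel. indicator {t<..} x * max (h x) 0)"
      by (rule nn_integral_eq_integral[OF int[OF h]]) auto
    finally show ?thesis .
  qed
  have "(LINT x|lborel. indicator {t<..} x * max (G x) 0) = (LINT x|lborel. indicator {t<..} x * max (- G x) 0)"
    for t
  proof -
    have "(LINT x|lborel. indicator {t<..} x * G x)
        = (LINT x|lborel. indicator {t<..} x * max (G x) 0 - indicator {t<..} x * max (- G x) 0)"
      by (rule Bochner_Integration.integral_cong) (auto simp: max_def)
    also have "\<dots> = (LINT x|lborel. indicator {t<..} x * max (G x) 0)
        - (LINT x|lborel. indicator {t<..} x * max (- G x) 0)"
      using int[OF G] int[OF integrable_minus[OF G]] by (rule Bochner_Integration.integral_diff)
    finally show ?thesis
      using G0[of t] by simp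
  qed
  then have "density lborel (\<lambda>x. ennreal (G x)) = density lborel (\<lambda>x. ennreal (- G x))"
    by (intro measure_eqI_lessThan)
      (simp_all add: emeasure_density_part[OF G] emeasure_density_part[OF integrable_minus[OF G]])
  from sigma_finite_measure.density_unique[OF sigma_finite_lborel _ _ this]
  have "AE x in lborel. ennreal (G x) = ennreal (- G x)"
    by simp
  then show ?thesis
    by eventually_elim (smt (verit) ennreal_eq_0_iff)
qed

lemma AE_eq_0_if_integral_greaterThan_eq_0:
  fixes G :: "real \<Rightarrow> real"
  assumes G: "integrable lebesgue G" and G0: "\<And>t. (LINT x|lebesgue. indicator {t<..} x * G x) = 0"
  shows "AE x in lebesgue. G x = 0"
proof -
  have Gm: "G \<in> borel_measurable lebesgue"
    using G by (rule borel_measurable_integrable)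
  then obtain G' where G'[measurable]: "G' \<in> borel_measurable lborel" and "AE x in lborel. G x = G' x"
    using completion_ex_borel_measurable_real by blast
  from AE_completion[OF this(2)] have G_G': "AE x in lebesgue. G x = G' x" .
  have "integrable lebesgue G'"
    using G integrable_cong_AE[OF _ measurable_completion[OF G'] G_G'] Gm
    by simp
  then have "integrable lborel G'"
    by (simp add: integrable_completion)
  moreover have "(LINT x|lborel. indicator {t<..} x * G' x) = 0" for t
  proof -
    have "(LINT x|lborel. indicator {t<..} x * G' x) = (LINT x|lebesgue. indicator {t<..} x * G' x)"
      by (simp add: integral_completion)
    also have "\<dots> = (LINT x|lebesgue. indicator {t<..} x * G x)"
      using G_G' by (intro integral_cong_AE borel_measurable_times Gm measurable_completion[OF G']
          measurable_completion[OF borel_measurable_indicator]) auto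
    finally show ?thesis
      using G0 by simp
  qed
  ultimately have "AE x in lborel. G' x = 0"
    by (rule AE_eq_0_if_integral_greaterThan_eq_0_lborel)
  from AE_completion[OF this] G_G' show ?thesis
    by eventually_elim simp
qed

lemma Ioo_Inf_Sup_subset_interval:
  fixes I :: "real set"
  assumes "is_interval I" "I \<noteq> {}" "bdd_below I" "bdd_above I"
  shows "{Inf I<..<Sup I} \<subseteq> I"
proof
  fix x assume "x \<in> {Inf I<..<Sup I}"
  then have "\<exists>y\<in>I. y < x" "\<exists>z\<in>I. x < z"
    using cInf_less_iff[OF assms(2,3)] less_cSup_iff[OF assms(2,4)] by simp_all
  with assms(1) show "x \<in> I"
    unfolding is_interval_1 by (meson less_imp_le)
qed

lemma weak_deriv_on_AE_eq_0_on_Ioo: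
  fixes f g :: "real \<Rightarrow> real"
  assumes wd: "weak_deriv_on a b f g" and "a \<le> c" "d \<le> b"
    and f0: "\<And>x. c < x \<Longrightarrow> x < d \<Longrightarrow> f x = 0"
  shows "AE x in lebesgue. c < x \<and> x < d \<longrightarrow> g x = 0"
proof -
  have "integrable lebesgue (\<lambda>x. indicator {a..b} x * g x)"
    using wd by (simp add: weak_deriv_on_def integrable_restrict_space)
  from integrable_mult_indicator[OF _ this, of "{c<..<d}"]
  have "integrable lebesgue (\<lambda>x. indicator {c<..<d} x * (indicator {a..b} x * g x))"
    by simp
  moreover have "(LINT x|lebesgue. indicator {t<..} x * (indicator {c<..<d} x * (indicator {a..b} x * g x))) = 0"
    for t
  proof -
    have "(LINT x|lebesgue. indicator {t<..} x * (indicator {c<..<d} x * (indicator {a..b} x * g x)))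
        = (LINT x|lebesgue. indicator {a..b} x *\<^sub>R (g x * indicator {max t c<..<d} x))"
      by (intro Bochner_Integration.integral_cong) (auto simp: indicator_def)
    also have "\<dots> = (LINT x|lebesgue_on {a..b}. g x * indicator {max t c<..<d} x)"
      by (simp add: integral_restrict_space)
    also have "\<dots> = 0"
      using \<open>a \<le> c\<close> f0 by (intro weak_deriv_on_integral_indicator_eq_0[OF wd _ \<open>d \<le> b\<close>]) auto
    finally show ?thesis .
  qed
  ultimately have "AE x in lebesgue. indicator {c<..<d} x * (indicator {a..b} x * g x) = 0"
    by (rule AE_eq_0_if_integral_greaterThan_eq_0)
  then show ?thesis
    by eventually_elim (use \<open>a \<le> c\<close> \<open>d \<le> b\<close> in \<open>auto simp: indicator_def\<close>)
qed

lemma weak_deriv_on_AE_eq_0_on_interval: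
  fixes f g :: "real \<Rightarrow> real"
  assumes wd: "weak_deriv_on a b f g" and I: "is_interval I" "I \<subseteq> {a..b}"
    and f0: "\<And>x. x \<in> I \<Longrightarrow> f x = 0"
  shows "AE x in lebesgue. x \<in> I \<longrightarrow> g x = 0"
proof (cases "I = {}")
  case False
  have bdd: "bdd_below I" "bdd_above I"
    using bdd_below_mono[OF _ I(2)] bdd_above_mono[OF _ I(2)] by simp_all
  have "a \<le> Inf I"
    by (rule cInf_greatest[OF False]) (use I(2) in auto)
  moreover have "Sup I \<le> b"
    by (rule cSup_least[OF False]) (use I(2) in auto)
  moreover have "x \<in> I" if "Inf I < x" "x < Sup I" for x
    using Ioo_Inf_Sup_subset_interval[OF I(1) False bdd] that by auto
  ultimately have "AE x in lebesgue. Inf I < x \<and> x < Sup I \<longrightarrow> g x = 0"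
    using f0 by (intro weak_deriv_on_AE_eq_0_on_Ioo[OF wd]) auto
  moreover have "AE x in lebesgue. x \<notin> {Inf I, Sup I}"
    by (intro AE_not_in negligible_iff_null_sets[THEN iffD1] negligible_finite) simp
  ultimately show ?thesis
  proof eventually_elim
    case (elim x)
    show ?case
    proof
      assume "x \<in> I"
      have "Inf I \<le> x" "x \<le> Sup I"
        using cInf_lower[OF \<open>x \<in> I\<close> bdd(1)] cSup_upper[OF \<open>x \<in> I\<close> bdd(2)] .
      with elim(2) have "Inf I < x" "x < Sup I"
        by auto
      with elim(1) show "g x = 0"
        by simp
    qed
  qed
qed simp

section \<open>Moore--Penrose pseudo-inverse\<close>

lemma matrix_add_rdistrib: "((A::'a::semiring_1^'n^'m) + B) ** C = A ** C + B ** C"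
  by (simp add: matrix_matrix_mult_def vec_eq_iff sum.distrib distrib_right)

lemma matrix_diff_rdistrib: "((A::'a::ring_1^'n^'m) - B) ** C = A ** C - B ** C"
  by (simp add: matrix_matrix_mult_def vec_eq_iff sum_subtractf left_diff_distrib)

lemma matrix_diff_ldistrib: "(A::'a::ring_1^'n^'m) ** (B - C) = A ** B - A ** C"
  by (simp add: matrix_matrix_mult_def vec_eq_iff sum_subtractf right_diff_distrib)

definition is_pinv :: "real^'n^'m \<Rightarrow> real^'m^'n \<Rightarrow> bool" where
  "is_pinv A X \<longleftrightarrow> A ** X ** A = A \<and> X ** A ** X = X \<and>
     transpose (A ** X) = A ** X \<and> transpose (X ** A) = X ** A"

lemma is_pinv_unique:
  assumes X: "is_pinv A X" and Y: "is_pinv A Y"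
  shows "X = Y"
proof -
  have AXA: "A ** X ** A = A" and XAX: "X ** A ** X = X"
    and AX: "transpose (A ** X) = A ** X" and XA: "transpose (X ** A) = X ** A"
    using X by (simp_all add: is_pinv_def)
  have AYA: "A ** Y ** A = A" and YAY: "Y ** A ** Y = Y"
    and AY: "transpose (A ** Y) = A ** Y" and YA: "transpose (Y ** A) = Y ** A"
    using Y by (simp_all add: is_pinv_def)
  have "X = X ** transpose (A ** X)"
    using XAX AX by (simp add: matrix_mul_assoc)
  also have "\<dots> = X ** transpose (A ** Y ** A ** X)"
    using AYA by simp
  also have "\<dots> = X ** transpose (A ** X) ** transpose (A ** Y)"
    by (simp add: matrix_transpose_mul matrix_mul_assoc)
  also have "\<dots> = X ** A ** Y"
    using XAX AX AY by (simp add: matrix_mul_assoc)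
  finally have X_eq: "X = X ** A ** Y" .
  have "Y = transpose (Y ** A) ** Y"
    using YAY YA by (simp add: matrix_mul_assoc)
  also have "\<dots> = transpose (Y ** (A ** X ** A)) ** Y"
    using AXA by simp
  also have "\<dots> = transpose (X ** A) ** transpose (Y ** A) ** Y"
    by (simp add: matrix_transpose_mul matrix_mul_assoc)
  also have "\<dots> = X ** A ** (Y ** A ** Y)"
    using XA YA by (simp add: matrix_mul_assoc)
  also have "\<dots> = X ** A ** Y"
    using YAY by simp
  finally show ?thesis
    using X_eq by simp
qed

lemma is_pinv_pinv:
  fixes A X :: "real^'n^'n"
  assumes "is_pinv A X"
  shows "is_pinv A (pinv A)"
  unfolding pinv_def is_pinv_def[symmetric] using assms by (rule theI) (rule is_pinv_unique[OF _ assms])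

lemma orthogonal_projection_matrix_exists:
  fixes W :: "(real^'n) set"
  assumes "subspace W"
  obtains P :: "real^'n^'n"
  where "transpose P = P" "\<And>x. P *v x \<in> W" "\<And>w. w \<in> W \<Longrightarrow> P *v w = w"
proof -
  obtain B where "B \<subseteq> W" and B_orth: "pairwise orthogonal B" and B_norm: "\<And>b. b \<in> B \<Longrightarrow> norm b = 1"
    and "independent B" and B_span: "span B = W"
    using orthonormal_basis_subspace[OF assms] by metis
  then have "finite B"
    by (simp add: independent_imp_finite)
  define P :: "real^'n^'n" where "P = (\<chi> i j. \<Sum>b\<in>B. b $ i * b $ j)"
  have P_apply: "P *v x = (\<Sum>b\<in>B. (b \<bullet> x) *\<^sub>R b)" for x
    by (simp add: vec_eq_iff P_def matrix_vector_mult_def inner_vec_def sum_component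
        sum_distrib_left sum_distrib_right algebra_simps) (subst sum.swap, simp add: algebra_simps)
  have inner_P: "b \<bullet> (P *v x) = b \<bullet> x" if "b \<in> B" for b x
  proof -
    have "b \<bullet> (P *v x) = (\<Sum>c\<in>B. (c \<bullet> x) * (b \<bullet> c))"
      by (simp add: P_apply inner_sum_right)
    also have "\<dots> = (b \<bullet> x) * (b \<bullet> b) + (\<Sum>c\<in>B - {b}. (c \<bullet> x) * (b \<bullet> c))"
      using that \<open>finite B\<close> by (simp add: sum.remove)
    also have "(\<Sum>c\<in>B - {b}. (c \<bullet> x) * (b \<bullet> c)) = 0"
      using B_orth that by (intro sum.neutral) (auto simp: pairwise_def orthogonal_def)
    also have "b \<bullet> b = 1"
      using B_norm[OF that] by (simp add: dot_square_norm)
    finally show ?thesis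
      by simp
  qed
  show ?thesis
  proof
    show "transpose P = P"
      by (simp add: P_def transpose_def vec_eq_iff mult.commute)
    show P_in: "P *v x \<in> W" for x
      unfolding P_apply B_span[symmetric] by (intro span_sum span_mul span_base)
    show "P *v w = w" if "w \<in> W" for w
    proof -
      have "w - P *v w \<in> span B"
        using that P_in B_span \<open>subspace W\<close> by (simp add: subspace_diff)
      moreover have "orthogonal (w - P *v w) b" if "b \<in> B" for b
        using inner_P[OF that, of w]
        by (simp add: orthogonal_def inner_diff_left inner_commute[of "P *v w" b] inner_commute[of w b])
      ultimately have "orthogonal (w - P *v w) (w - P *v w)"
        by (rule orthogonal_to_span)
      then show ?thesis
        by (simp add: orthogonal_def)
    qed
  qed
qed

lemma transpose_diff: "transpose ((A::'a::ab_group_add^'n^'m) - B) = transpose A - transpose B"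
  by (simp add: transpose_def vec_eq_iff)

lemma transpose_zero: "transpose (0::'a::zero^'n^'m) = 0"
  by (simp add: transpose_def vec_eq_iff)

lemma inj_add_kernel_projection:
  fixes A P :: "real^'n^'n"
  assumes PA: "P ** A = 0" and PP: "P ** P = P" and P_id: "\<And>v. A *v v = 0 \<Longrightarrow> P *v v = v"
  shows "inj ((*v) (A + P))"
proof (rule linear_inj_iff_eq_0[THEN iffD2])
  show "linear ((*v) (A + P))"
    by simp
  show "\<forall>v. (A + P) *v v = 0 \<longrightarrow> v = 0"
  proof (intro allI impI)
    fix v assume "(A + P) *v v = 0"
    then have "P *v ((A + P) *v v) = 0"
      by simp
    then have "P *v v = 0"
      by (simp add: matrix_vector_mul_assoc matrix_add_ldistrib PA PP)
    with \<open>(A + P) *v v = 0\<close> have "A *v v = 0"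
      by (simp add: matrix_vector_mult_add_rdistrib)
    with \<open>P *v v = 0\<close> show "v = 0"
      using P_id by metis
  qed
qed

text \<open>With \<open>P\<close> the orthogonal projection onto the kernel of the symmetric matrix \<open>A\<close>,
  the matrix \<open>A + P\<close> is invertible and \<open>(A + P)\<^sup>-\<^sup>1 - P\<close> is the pseudo-inverse of \<open>A\<close>.\<close>

lemma is_pinv_exists_if_symmetric:
  fixes A :: "real^'n^'n"
  assumes sym: "transpose A = A"
  shows "\<exists>X. is_pinv A X"
proof -
  have "subspace {v. A *v v = 0}"
    by (rule linear_subspace_kernel) simp
  then obtain P :: "real^'n^'n" where P_sym: "transpose P = P"
    and P_ker: "\<And>x. A *v (P *v x) = 0" and P_id: "\<And>v. A *v v = 0 \<Longrightarrow> P *v v = v"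
    by (rule orthogonal_projection_matrix_exists) auto
  have AP: "A ** P = 0"
    by (simp add: matrix_eq matrix_vector_mul_assoc[symmetric] P_ker)
  have "transpose (P ** A) = transpose 0"
    by (simp add: matrix_transpose_mul sym P_sym AP transpose_zero)
  then have PA: "P ** A = 0"
    by simp
  have PP: "P ** P = P"
    by (simp add: matrix_eq matrix_vector_mul_assoc[symmetric] P_id P_ker)
  have "inj ((*v) (A + P))"
    using PA PP P_id by (rule inj_add_kernel_projection)
  then obtain N where NM: "N ** (A + P) = mat 1"
    using matrix_left_invertible_injective by blast
  then have MN: "(A + P) ** N = mat 1"
    by (rule matrix_left_right_inverse[THEN iffD1])
  have PN: "P ** N = P"
    using arg_cong[OF MN, of "(**) P"] by (simp add: matrix_mul_assoc matrix_add_ldistrib PA PP)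
  have NP: "N ** P = P"
    using arg_cong[OF NM, of "\<lambda>Z. Z ** P"] by (simp add: matrix_mul_assoc[symmetric] matrix_add_rdistrib AP PP)
  have AX: "A ** (N - P) = mat 1 - P"
    using MN by (simp add: matrix_diff_ldistrib matrix_add_rdistrib AP PN algebra_simps)
  have XA: "(N - P) ** A = mat 1 - P"
    using NM by (simp add: matrix_diff_rdistrib matrix_add_ldistrib PA NP algebra_simps)
  have "is_pinv A (N - P)"
    unfolding is_pinv_def AX matrix_mul_assoc XA
    by (simp add: matrix_diff_ldistrib matrix_diff_rdistrib AX XA PA PN PP transpose_diff P_sym)
  then show ?thesis ..
qed

lemma pinv_cancel_if_kernel_subset:
  fixes A B :: "real^'n^'n"
  assumes "transpose A = A" and kernel: "\<And>v. A *v v = 0 \<Longrightarrow> B *v v = 0"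
  shows "B ** pinv A ** A = B"
proof -
  have AXA: "A ** pinv A ** A = A"
    using is_pinv_pinv is_pinv_exists_if_symmetric[OF assms(1)] unfolding is_pinv_def by blast
  have "B *v (pinv A *v (A *v w)) = B *v w" for w
  proof -
    have "A *v (w - pinv A *v (A *v w)) = 0"
      using AXA by (simp add: matrix_vector_mult_diff_distrib matrix_vector_mul_assoc matrix_mul_assoc)
    from kernel[OF this] show ?thesis
      by (simp add: matrix_vector_mult_diff_distrib)
  qed
  then show ?thesis
    by (simp add: matrix_eq matrix_vector_mul_assoc[symmetric])
qed

section \<open>Kernels of a monotone family of matrices\<close>

lemma finite_chain_of_subspaces:
  fixes S :: "'a::euclidean_space set set"
  assumes subspace: "\<And>W. W \<in> S \<Longrightarrow> subspace W"
    and chain: "\<And>V W. V \<in> S \<Longrightarrow> W \<in> S \<Longrightarrow> V \<subseteq> W \<or> W \<subseteq> V"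
  shows "finite S"
proof -
  have "inj_on dim S"
  proof
    fix V W assume "V \<in> S" "W \<in> S" "dim V = dim W"
    with chain[OF \<open>V \<in> S\<close> \<open>W \<in> S\<close>] subspace show "V = W"
      using subspace_dim_equal[of V W] subspace_dim_equal[of W V] by auto
  qed
  moreover have "dim ` S \<subseteq> {..DIM('a)}"
    using dim_subset_UNIV by auto
  ultimately show ?thesis
    using finite_imageD finite_subset by blast
qed

lemma weak_deriv_on_matrix_vector_mult:
  fixes A A' :: "real \<Rightarrow> real^'n^'m"
  assumes "\<And>i j. weak_deriv_on a b (\<lambda>s. A s $ i $ j) (\<lambda>s. A' s $ i $ j)"
  shows "weak_deriv_on a b (\<lambda>s. (A s *v v) $ i) (\<lambda>s. (A' s *v v) $ i)"
  using weak_deriv_on_sum[of UNIV a b "\<lambda>j s. A s $ i $ j" "\<lambda>j s. A' s $ i $ j" "\<lambda>j. v $ j"] assms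
  by (simp add: matrix_vector_mult_def mult.commute)

lemma AE_in_kernel_imp_in_deriv_kernel:
  fixes A A' :: "real \<Rightarrow> real^'n^'m"
  assumes wd: "\<And>i j. weak_deriv_on a b (\<lambda>s. A s $ i $ j) (\<lambda>s. A' s $ i $ j)"
    and kernel_mono: "\<And>s s' v. s' \<le> s \<Longrightarrow> s' \<in> {a..b} \<Longrightarrow> s \<in> {a..b} \<Longrightarrow>
      A s' *v v = 0 \<Longrightarrow> A s *v v = 0"
  shows "AE s in lebesgue. s \<in> {a..b} \<and> A s *v v = 0 \<longrightarrow> A' s *v v = 0"
proof -
  let ?I = "{s \<in> {a..b}. A s *v v = 0}"
  have "is_interval ?I"
    unfolding is_interval_1
  proof (intro ballI allI impI)
    fix s1 s2 s assume "s1 \<in> ?I" "s2 \<in> ?I" "s1 \<le> s \<and> s \<le> s2"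
    then show "s \<in> ?I"
      using kernel_mono[of s1 s v] by auto
  qed
  then have "AE s in lebesgue. s \<in> ?I \<longrightarrow> (A' s *v v) $ i = 0" for i
    by (rule weak_deriv_on_AE_eq_0_on_interval[OF weak_deriv_on_matrix_vector_mult[OF wd]]) auto
  then have "AE s in lebesgue. \<forall>i\<in>UNIV. s \<in> ?I \<longrightarrow> (A' s *v v) $ i = 0"
    by (intro AE_finite_allI) auto
  then show ?thesis
    by eventually_elim (simp add: vec_eq_iff)
qed

lemma finite_kernels_if_mono:
  fixes A :: "real \<Rightarrow> real^'n^'m"
  assumes kernel_mono: "\<And>s s' v. s' \<le> s \<Longrightarrow> s' \<in> {a..b} \<Longrightarrow> s \<in> {a..b} \<Longrightarrow>
      A s' *v v = 0 \<Longrightarrow> A s *v v = 0"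
  shows "finite ((\<lambda>s. {v. A s *v v = 0}) ` {a..b})"
proof (rule finite_chain_of_subspaces)
  show "subspace W" if "W \<in> (\<lambda>s. {v. A s *v v = 0}) ` {a..b}" for W
    using that by (auto intro: linear_subspace_kernel)
  show "V \<subseteq> W \<or> W \<subseteq> V"
    if VW: "V \<in> (\<lambda>s. {v. A s *v v = 0}) ` {a..b}" "W \<in> (\<lambda>s. {v. A s *v v = 0}) ` {a..b}" for V W
  proof -
    obtain s s' where "s \<in> {a..b}" "s' \<in> {a..b}" "V = {v. A s *v v = 0}" "W = {v. A s' *v v = 0}"
      using VW by blast
    then show ?thesis
      using kernel_mono[of s s'] kernel_mono[of s' s] by (cases "s \<le> s'") auto
  qed
qed

lemma AE_kernel_subset_deriv_kernel:
  fixes A A' :: "real \<Rightarrow> real^'n^'m"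
  assumes wd: "\<And>i j. weak_deriv_on a b (\<lambda>s. A s $ i $ j) (\<lambda>s. A' s $ i $ j)"
    and kernel_mono: "\<And>s s' v. s' \<le> s \<Longrightarrow> s' \<in> {a..b} \<Longrightarrow> s \<in> {a..b} \<Longrightarrow>
      A s' *v v = 0 \<Longrightarrow> A s *v v = 0"
  shows "AE s in lebesgue. s \<in> {a..b} \<longrightarrow> (\<forall>v. A s *v v = 0 \<longrightarrow> A' s *v v = 0)"
proof -
  define K where "K = (\<lambda>s. {v. A s *v v = 0})"
  have single: "AE s in lebesgue. s \<in> {a..b} \<and> A s *v v = 0 \<longrightarrow> A' s *v v = 0" for v
    using wd kernel_mono by (rule AE_in_kernel_imp_in_deriv_kernel)
  \<comment> \<open>For each of the finitely many kernels, the finitely many vectors of a basis suffice.\<close>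
  have per_kernel: "AE s in lebesgue. s \<in> {a..b} \<and> K s = W \<longrightarrow> (\<forall>v\<in>W. A' s *v v = 0)" for W
  proof -
    obtain B where B: "B \<subseteq> W" "independent B" "W \<subseteq> span B"
      by (rule basis_exists)
    have "AE s in lebesgue. \<forall>u\<in>B. s \<in> {a..b} \<and> A s *v u = 0 \<longrightarrow> A' s *v u = 0"
      by (rule AE_finite_allI[OF independent_imp_finite[OF B(2)]], rule single)
    then show ?thesis
    proof eventually_elim
      case (elim s)
      show ?case
      proof (intro impI ballI)
        fix v assume s: "s \<in> {a..b} \<and> K s = W" and "v \<in> W"
        have "A' s *v u = 0" if "u \<in> B" for u
        proof -
          have "u \<in> K s"
            using that B(1) s by blast
          then have "A s *v u = 0"
            by (simp add: K_def)
          with elim s that show ?thesis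
            by blast
        qed
        then show "A' s *v v = 0"
          by (rule linear_eq_0_on_span[OF matrix_vector_mul_linear _ subsetD[OF B(3) \<open>v \<in> W\<close>]])
      qed
    qed
  qed
  have "finite (K ` {a..b})"
    unfolding K_def using kernel_mono by (rule finite_kernels_if_mono)
  then have "AE s in lebesgue. \<forall>W\<in>K ` {a..b}.
      s \<in> {a..b} \<and> K s = W \<longrightarrow> (\<forall>v\<in>W. A' s *v v = 0)"
    by (rule AE_finite_allI) (rule per_kernel)
  then show ?thesis
  proof eventually_elim
    case (elim s)
    show ?case
    proof (intro impI allI)
      fix v assume "s \<in> {a..b}" "A s *v v = 0"
      then have "K s \<in> K ` {a..b}" "v \<in> K s"
        by (auto simp: K_def)
      with elim \<open>s \<in> {a..b}\<close> show "A' s *v v = 0"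
        by blast
    qed
  qed
qed

theorem propositionA4:
  fixes A A' :: "real \<Rightarrow> real^'n^'n"
  assumes H1: "\<forall>i j. H1_with_deriv (\<lambda>s. A s $ i $ j) (\<lambda>s. A' s $ i $ j)"
    and A0: "A 0 = mat 1" and A1: "A 1 = 0"
    and psd: "\<forall>s\<in>{0..1}. psd (A s)"
    and mono: "\<forall>s\<in>{0..1}. \<forall>s'\<in>{0..1}. \<forall>x. s \<ge> s' \<longrightarrow> norm (A s *v x) \<le> norm (A s' *v x)"
    and cont: "continuous_on {0..1} A"
  shows "(\<forall>x0 \<epsilon> :: real^'n. AE s in lebesgue_on {0..1}.
            A' s *v (pinv (A s) *v ((A s *v x0 + (mat 1 - A s) *v \<epsilon>) - \<epsilon>))
              = A' s *v (x0 - \<epsilon>))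
       \<and> (AE s in lebesgue_on {0..1}. A' s ** pinv (A s) ** A s = A' s)"
proof -
  have "weak_deriv_on 0 1 (\<lambda>s. A s $ i $ j) (\<lambda>s. A' s $ i $ j)" for i j
    using H1 by (simp add: H1_with_deriv_def)
  moreover have "A s *v v = 0" if "s' \<le> s" "s' \<in> {0..1}" "s \<in> {0..1}" "A s' *v v = 0" for s s' v
    using mono that by (metis norm_eq_zero norm_le_zero_iff)
  ultimately have "AE s in lebesgue. s \<in> {0..1} \<longrightarrow> (\<forall>v. A s *v v = 0 \<longrightarrow> A' s *v v = 0)"
    by (rule AE_kernel_subset_deriv_kernel)
  then have "AE s in lebesgue. s \<in> {0..1} \<longrightarrow> A' s ** pinv (A s) ** A s = A' s"
    by eventually_elim (use psd in \<open>auto simp: psd_def intro: pinv_cancel_if_kernel_subset\<close>)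
  then have cancel: "AE s in lebesgue_on {0..1}. A' s ** pinv (A s) ** A s = A' s"
    by (subst AE_restrict_space_iff) auto
  have "AE s in lebesgue_on {0..1}.
      A' s *v (pinv (A s) *v ((A s *v x0 + (mat 1 - A s) *v \<epsilon>) - \<epsilon>)) = A' s *v (x0 - \<epsilon>)" for x0 \<epsilon>
    using cancel
  proof eventually_elim
    case (elim s)
    have "(A s *v x0 + (mat 1 - A s) *v \<epsilon>) - \<epsilon> = A s *v (x0 - \<epsilon>)"
      by (simp add: matrix_vector_mult_diff_rdistrib matrix_vector_mult_diff_distrib)
    then show ?case
      using elim by (simp add: matrix_vector_mul_assoc matrix_mul_assoc)
  qed
  with cancel show ?thesis
    by blast
qed

end
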